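(* Let $L$ be a distributive lattice. If $L$ is countably order bounded, then $\mathrm{FVL}\langle L\rangle$ is order dense in $\mathrm{FBL}\langle L\rangle$. If moreover $L$ is totally ordered, the converse holds: if $\mathrm{FVL}\langle L\rangle$ is order dense in $\mathrm{FBL}\langle L\rangle$, then $L$ is countably order bounded.
   Context: $L^*$ is the set of all lattice homomorphisms $x^*:L\to[-1,1]$; for $x\in L$, $\delta_x:L^*\to\mathbb R$ is $\delta_x(x^* )=x^*(x)$. A function $f:L^*\to\mathbb R$ is positively homogeneous if $f(\lambda x^* )=\lambda f(x^* )$ whenever $\lambda\ge0$ and $\lambda x^*\in L^*$; for such $f$, $\|f\|=\sup\{\sum_{i=1}^m|f(x_i^* )|: m\in\mathbb N,\ x_i^*\in L^*,\ \sup_{x\in L}\sum_{i=1}^m|x_i^*(x)|\le1\}$. $\mathrm{FVL}\langle L\rangle$ is the vector sublattice generated by $\{\delta_x:x\in L\}$ (pointwise operations), and $\mathrm{FBL}\langle L\rangle$ is its norm closure inside the Banach lattice of positively homogeneous functions with finite norm, ordered pointwise. $\mathrm{FVL}\langle L\rangle$ is order dense in $\mathrm{FBL}\langle L\rangle$ if for every $f\in\mathrm{FBL}\langle L\rangle$ with $f>0$ there is $g\in\mathrm{FVL}\langle L\rangle$ with $0<g\le f$. A lattice $L$ is countably order bounded if for every countable $A\subseteq L$ there are $a,b\in L$ with $a\le x\le b$ for all $x\in A$. *)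

theory Defs
  imports Complex_Main "HOL-Library.Countable_Set" "HOL-Library.Extended_Real"
begin

definition lat_dual :: "('a::lattice \<Rightarrow> real) set" where
  "lat_dual = {\<phi>. (\<forall>x. \<phi> x \<in> {-1..1}) \<and>
      (\<forall>x y. \<phi> (sup x y) = max (\<phi> x) (\<phi> y) \<and> \<phi> (inf x y) = min (\<phi> x) (\<phi> y))}"

definition delta :: "'a::lattice \<Rightarrow> ('a \<Rightarrow> real) \<Rightarrow> real" where
  "delta x = (\<lambda>\<phi>. \<phi> x)"

inductive_set fvl :: "(('a::lattice \<Rightarrow> real) \<Rightarrow> real) set" where
  gen: "delta x \<in> fvl"
| add: "f \<in> fvl \<Longrightarrow> g \<in> fvl \<Longrightarrow> (\<lambda>\<phi>. f \<phi> + g \<phi>) \<in> fvl"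
| smult: "f \<in> fvl \<Longrightarrow> (\<lambda>\<phi>. c * f \<phi>) \<in> fvl"
| sup: "f \<in> fvl \<Longrightarrow> g \<in> fvl \<Longrightarrow> (\<lambda>\<phi>. max (f \<phi>) (g \<phi>)) \<in> fvl"
| inf: "f \<in> fvl \<Longrightarrow> g \<in> fvl \<Longrightarrow> (\<lambda>\<phi>. min (f \<phi>) (g \<phi>)) \<in> fvl"

definition pos_homog :: "(('a::lattice \<Rightarrow> real) \<Rightarrow> real) \<Rightarrow> bool" where
  "pos_homog f = (\<forall>\<phi>\<in>lat_dual. \<forall>c::real. c \<ge> 0 \<longrightarrow> (\<lambda>x. c * \<phi> x) \<in> lat_dual \<longrightarrow>
       f (\<lambda>x. c * \<phi> x) = c * f \<phi>)"

definition fbl_norm :: "(('a::lattice \<Rightarrow> real) \<Rightarrow> real) \<Rightarrow> ereal" where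
  "fbl_norm f = (SUP xs \<in> {xs. set xs \<subseteq> lat_dual \<and> (\<forall>x. (\<Sum>\<phi>\<leftarrow>xs. \<bar>\<phi> x\<bar>) \<le> 1)}.
       ereal (\<Sum>\<phi>\<leftarrow>xs. \<bar>f \<phi>\<bar>))"

definition fbl :: "(('a::lattice \<Rightarrow> real) \<Rightarrow> real) set" where
  "fbl = {f. pos_homog f \<and> fbl_norm f < \<infinity> \<and>
      (\<forall>e>0. \<exists>g\<in>fvl. fbl_norm (\<lambda>\<phi>. f \<phi> - g \<phi>) < ereal e)}"

definition fvl_order_dense :: "'a::lattice itself \<Rightarrow> bool" where
  "fvl_order_dense _ = (\<forall>f \<in> (fbl :: (('a \<Rightarrow> real) \<Rightarrow> real) set).
      ((\<forall>\<phi>\<in>lat_dual. 0 \<le> f \<phi>) \<and> (\<exists>\<phi>\<in>lat_dual. f \<phi> \<noteq> 0)) \<longrightarrow>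
      (\<exists>g\<in>fvl. (\<forall>\<phi>\<in>lat_dual. 0 \<le> g \<phi> \<and> g \<phi> \<le> f \<phi>) \<and> (\<exists>\<phi>\<in>lat_dual. g \<phi> \<noteq> 0)))"

definition countably_order_bounded :: "'a::order itself \<Rightarrow> bool" where
  "countably_order_bounded _ = (\<forall>A :: 'a set. countable A \<longrightarrow>
      (\<exists>a b. \<forall>x\<in>A. a \<le> x \<and> x \<le> b))"

end

theory Submission
  imports Defs
begin

(* Let L be countably order bounded and f > 0 in FBL, with approximants G_n in FVL, |f - G_n| < 1/(n+1)
   on L*.  Each G_n depends on finitely many coordinates only, so f depends only on a countable set
   A of coordinates, and A lies in an interval [a,b].  Every x* in L* is bounded on A by
   r = max(|x*(a)|, |x*(b)|) and agrees on A with r y* for some y* in L*; by positive homogeneity a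
   uniform error e of an approximant g thus becomes the pointwise error e r, and
   (g - e max(|delta_a|, |delta_b|))^+ lies between 0 and f and is positive wherever f > 2e.

   Conversely, a countable subset of the chain L without an upper bound (dually, a lower bound) yields
   a sequence x_n >= b that no element of L bounds.  The function
   F = ((delta_b)^+ - sum_n 2^-n (delta_(x_n) - delta_b))^+ lies in FBL and F(1) = 1.  An element
   0 <= g <= F of FVL depends only on a finite set S; the homomorphism equal to t y* on S and to 1
   above S annihilates F for t = 2^-N / (1 + 2^-N), so g vanishes at t y*,
   hence at y*. *)

lemma lat_dual_abs_le: "\<phi> \<in> lat_dual \<Longrightarrow> \<bar>\<phi> x\<bar> \<le> 1"
  unfolding lat_dual_def by (force simp: abs_le_iff)

lemma lat_dual_mono:
  assumes "\<phi> \<in> lat_dual" "a \<le> b"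
  shows "\<phi> a \<le> \<phi> b"
proof -
  have "\<phi> (inf a b) = min (\<phi> a) (\<phi> b)"
    using assms(1) unfolding lat_dual_def by blast
  then show ?thesis
    using assms(2) by (simp add: inf_absorb1)
qed

lemma lat_dual_comp_mono:
  assumes "\<phi> \<in> lat_dual" "mono h" "\<And>u. u \<in> {-1..1} \<Longrightarrow> h u \<in> {-1..1}"
  shows "(\<lambda>x. h (\<phi> x)) \<in> lat_dual"
  using assms unfolding lat_dual_def by (simp add: max_of_mono min_of_mono)

lemma lat_dual_scale:
  assumes "\<phi> \<in> lat_dual" "0 \<le> c" "c \<le> 1"
  shows "(\<lambda>x. c * \<phi> x) \<in> lat_dual"
proof (rule lat_dual_comp_mono[OF assms(1)])
  show "mono ((*) c)"
    using assms(2) by (simp add: monoI mult_left_mono)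
  show "c * u \<in> {-1..1}" if "u \<in> {-1..1}" for u
  proof -
    have "\<bar>c * u\<bar> \<le> 1"
      using that assms(2,3) by (simp add: abs_mult abs_le_iff mult_le_one)
    then show ?thesis
      by (simp add: abs_le_iff)
  qed
qed

lemma const_lat_dual: "\<bar>c\<bar> \<le> 1 \<Longrightarrow> (\<lambda>_. c) \<in> lat_dual"
  unfolding lat_dual_def by (simp add: abs_le_iff)

lemma chain_mono_lat_dual:
  fixes \<phi> :: "'a::lattice \<Rightarrow> real"
  assumes chain: "\<forall>x y::'a. x \<le> y \<or> y \<le> x"
    and mono: "\<And>a b. a \<le> b \<Longrightarrow> \<phi> a \<le> \<phi> b" and range: "\<And>x. \<phi> x \<in> {-1..1}"
  shows "\<phi> \<in> lat_dual"
  unfolding lat_dual_def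
proof (intro CollectI conjI allI range)
  fix x y :: 'a
  show "\<phi> (sup x y) = max (\<phi> x) (\<phi> y)" "\<phi> (inf x y) = min (\<phi> x) (\<phi> y)"
    using chain[rule_format, of x y] mono[of x y] mono[of y x]
    by (auto simp: sup_absorb1 sup_absorb2 inf_absorb1 inf_absorb2 max_def min_def)
qed

definition norming_list :: "('a::lattice \<Rightarrow> real) list \<Rightarrow> bool" where
  "norming_list xs \<longleftrightarrow> set xs \<subseteq> lat_dual \<and> (\<forall>y. (\<Sum>\<phi>\<leftarrow>xs. \<bar>\<phi> y\<bar>) \<le> 1)"

lemma fbl_norm_le:
  assumes "\<And>xs. norming_list xs \<Longrightarrow> (\<Sum>\<phi>\<leftarrow>xs. \<bar>h \<phi>\<bar>) \<le> B"
  shows "fbl_norm h \<le> ereal B"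
  unfolding fbl_norm_def by (rule SUP_least) (use assms in \<open>auto simp: norming_list_def\<close>)

lemma abs_le_fbl_norm:
  assumes "\<phi> \<in> lat_dual"
  shows "ereal \<bar>h \<phi>\<bar> \<le> fbl_norm h"
proof -
  have "norming_list [\<phi>]"
    using assms lat_dual_abs_le by (auto simp: norming_list_def)
  then have "ereal (\<Sum>\<psi>\<leftarrow>[\<phi>]. \<bar>h \<psi>\<bar>) \<le> fbl_norm h"
    unfolding fbl_norm_def norming_list_def by (intro SUP_upper) auto
  then show ?thesis
    by simp
qed

lemma sums_sum_list:
  fixes g :: "'b \<Rightarrow> nat \<Rightarrow> real"
  shows "(\<And>\<phi>. \<phi> \<in> set xs \<Longrightarrow> g \<phi> sums S \<phi>) \<Longrightarrow> (\<lambda>k. \<Sum>\<phi>\<leftarrow>xs. g \<phi> k) sums (\<Sum>\<phi>\<leftarrow>xs. S \<phi>)"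
  by (induction xs) (auto intro: sums_add)

lemma summable_weighted_abs:
  assumes "\<phi> \<in> lat_dual" "summable c" "\<And>k. 0 \<le> c k"
  shows "summable (\<lambda>k. c k * (\<bar>\<phi> (y k)\<bar> + \<bar>\<phi> (z k)\<bar>))"
proof (rule summable_comparison_test'[of "\<lambda>k. 2 * c k" 0])
  show "summable (\<lambda>k. 2 * c k)"
    using assms(2) by (rule summable_mult)
  show "norm (c k * (\<bar>\<phi> (y k)\<bar> + \<bar>\<phi> (z k)\<bar>)) \<le> 2 * c k" for k
  proof -
    have "\<bar>\<phi> (y k)\<bar> + \<bar>\<phi> (z k)\<bar> \<le> 2"
      using lat_dual_abs_le[OF assms(1), of "y k"] lat_dual_abs_le[OF assms(1), of "z k"] by linarith
    then show ?thesis
      using assms(3)[of k] by (simp add: abs_mult mult.commute mult_left_mono)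
  qed
qed

lemma fbl_norm_le_suminf:
  assumes c: "summable c" "\<And>k. 0 \<le> c k"
    and bound: "\<And>\<phi>. \<phi> \<in> lat_dual \<Longrightarrow> \<bar>h \<phi>\<bar> \<le> (\<Sum>k. c k * (\<bar>\<phi> (y k)\<bar> + \<bar>\<phi> (z k)\<bar>))"
  shows "fbl_norm h \<le> ereal (2 * suminf c)"
proof (rule fbl_norm_le)
  fix xs :: "('a \<Rightarrow> real) list"
  assume xs: "norming_list xs"
  let ?w = "\<lambda>\<phi> k. c k * (\<bar>\<phi> (y k)\<bar> + \<bar>\<phi> (z k)\<bar>)"
  have "?w \<phi> sums (\<Sum>k. ?w \<phi> k)" if "\<phi> \<in> set xs" for \<phi>
    using that xs c by (intro summable_sums summable_weighted_abs) (auto simp: norming_list_def)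
  then have w: "(\<lambda>k. \<Sum>\<phi>\<leftarrow>xs. ?w \<phi> k) sums (\<Sum>\<phi>\<leftarrow>xs. \<Sum>k. ?w \<phi> k)"
    by (rule sums_sum_list)
  have "(\<Sum>\<phi>\<leftarrow>xs. \<bar>h \<phi>\<bar>) \<le> (\<Sum>\<phi>\<leftarrow>xs. \<Sum>k. ?w \<phi> k)"
    using xs bound by (intro sum_list_mono) (auto simp: norming_list_def)
  also have "\<dots> = (\<Sum>k. \<Sum>\<phi>\<leftarrow>xs. ?w \<phi> k)"
    using w by (simp add: sums_unique)
  also have "\<dots> \<le> (\<Sum>k. 2 * c k)"
  proof (rule suminf_le)
    show "(\<Sum>\<phi>\<leftarrow>xs. ?w \<phi> k) \<le> 2 * c k" for k
    proof -
      have "(\<Sum>\<phi>\<leftarrow>xs. ?w \<phi> k) = c k * ((\<Sum>\<phi>\<leftarrow>xs. \<bar>\<phi> (y k)\<bar>) + (\<Sum>\<phi>\<leftarrow>xs. \<bar>\<phi> (z k)\<bar>))"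
        by (simp add: sum_list_const_mult sum_list_addf)
      also have "\<dots> \<le> c k * 2"
      proof (rule mult_left_mono[OF _ c(2)])
        have "(\<Sum>\<phi>\<leftarrow>xs. \<bar>\<phi> (y k)\<bar>) \<le> 1" "(\<Sum>\<phi>\<leftarrow>xs. \<bar>\<phi> (z k)\<bar>) \<le> 1"
          using xs by (auto simp: norming_list_def)
        then show "(\<Sum>\<phi>\<leftarrow>xs. \<bar>\<phi> (y k)\<bar>) + (\<Sum>\<phi>\<leftarrow>xs. \<bar>\<phi> (z k)\<bar>) \<le> 2"
          by linarith
      qed
      finally show ?thesis
        by simp
    qed
    show "summable (\<lambda>k. \<Sum>\<phi>\<leftarrow>xs. ?w \<phi> k)"
      using w by (rule sums_summable)
    show "summable (\<lambda>k. 2 * c k)"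
      using c(1) by (rule summable_mult)
  qed
  also have "\<dots> = 2 * suminf c"
    using c(1) by (rule suminf_mult)
  finally show "(\<Sum>\<phi>\<leftarrow>xs. \<bar>h \<phi>\<bar>) \<le> 2 * suminf c" .
qed

lemma fbl_pos_homog: "f \<in> fbl \<Longrightarrow> pos_homog f"
  unfolding fbl_def by blast

lemma fbl_uniform_approx:
  assumes "f \<in> fbl" "0 < e"
  shows "\<exists>g\<in>fvl. \<forall>\<phi>\<in>lat_dual. \<bar>f \<phi> - g \<phi>\<bar> < e"
proof -
  obtain g where "g \<in> fvl" and g: "fbl_norm (\<lambda>\<phi>. f \<phi> - g \<phi>) < ereal e"
    using assms unfolding fbl_def by blast
  have "\<bar>f \<phi> - g \<phi>\<bar> < e" if "\<phi> \<in> lat_dual" for \<phi>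
    using le_less_trans[OF abs_le_fbl_norm[OF that] g] by simp
  with \<open>g \<in> fvl\<close> show ?thesis
    by blast
qed

lemma pos_homog_diff: "pos_homog f \<Longrightarrow> pos_homog g \<Longrightarrow> pos_homog (\<lambda>\<phi>. f \<phi> - g \<phi>)"
  unfolding pos_homog_def by (simp add: right_diff_distrib)

lemma fvl_eval: "(\<lambda>\<phi>. \<phi> x) \<in> fvl"
  using fvl.gen[of x] by (simp add: delta_def)

lemma fvl_const_zero: "(\<lambda>\<phi>. 0) \<in> fvl"
  using fvl.smult[OF fvl_eval, where c = 0] by simp

lemma fvl_diff: "f \<in> fvl \<Longrightarrow> g \<in> fvl \<Longrightarrow> (\<lambda>\<phi>. f \<phi> - g \<phi>) \<in> fvl"
  using fvl.add[OF _ fvl.smult[of g "-1"], of f] by simp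

lemma fvl_abs: "f \<in> fvl \<Longrightarrow> (\<lambda>\<phi>. \<bar>f \<phi>\<bar>) \<in> fvl"
proof -
  assume "f \<in> fvl"
  then have "(\<lambda>\<phi>. max (f \<phi>) ((-1) * f \<phi>)) \<in> fvl"
    by (intro fvl.sup fvl.smult)
  moreover have "max u ((-1) * u) = \<bar>u\<bar>" for u :: real
    by auto
  ultimately show ?thesis
    by simp
qed

lemma fvl_sum: "(\<And>n. n < (N::nat) \<Longrightarrow> F n \<in> fvl) \<Longrightarrow> (\<lambda>\<phi>. \<Sum>n<N. F n \<phi>) \<in> fvl"
  by (induction N) (auto intro: fvl.add fvl_const_zero)

lemma fvl_scale_arg: "h \<in> fvl \<Longrightarrow> 0 \<le> c \<Longrightarrow> h (\<lambda>x. c * \<phi> x) = c * h \<phi>"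
  by (induction arbitrary: \<phi> rule: fvl.induct)
    (simp_all add: delta_def distrib_left max_mult_distrib_left min_mult_distrib_left)

lemma fvl_pos_homog: "h \<in> fvl \<Longrightarrow> pos_homog h"
  unfolding pos_homog_def by (simp add: fvl_scale_arg)

definition determined_by :: "'a set \<Rightarrow> (('a::lattice \<Rightarrow> real) \<Rightarrow> real) \<Rightarrow> bool" where
  "determined_by A h \<longleftrightarrow> (\<forall>\<phi>\<in>lat_dual. \<forall>\<psi>\<in>lat_dual. (\<forall>x\<in>A. \<phi> x = \<psi> x) \<longrightarrow> h \<phi> = h \<psi>)"

lemma determined_byD:
  "determined_by A h \<Longrightarrow> \<phi> \<in> lat_dual \<Longrightarrow> \<psi> \<in> lat_dual \<Longrightarrow> (\<And>x. x \<in> A \<Longrightarrow> \<phi> x = \<psi> x) \<Longrightarrow> h \<phi> = h \<psi>"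
  unfolding determined_by_def by blast

lemma determined_by_mono: "A \<subseteq> B \<Longrightarrow> determined_by A h \<Longrightarrow> determined_by B h"
  unfolding determined_by_def by blast

lemma determined_by_comp: "determined_by A f \<Longrightarrow> determined_by A (\<lambda>\<phi>. F (f \<phi>))"
  unfolding determined_by_def by metis

lemma determined_by_comp2:
  "determined_by A f \<Longrightarrow> determined_by B g \<Longrightarrow> determined_by (A \<union> B) (\<lambda>\<phi>. F (f \<phi>) (g \<phi>))"
  unfolding determined_by_def by (metis UnCI)

lemma fvl_determined_by_finite: "h \<in> fvl \<Longrightarrow> \<exists>S. finite S \<and> determined_by S h"
proof (induction rule: fvl.induct)
  case (gen x)
  have "determined_by {x} (delta x)"
    unfolding determined_by_def delta_def by simp
  then show ?case
    by blast
next
  case (smult f c)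
  then show ?case
    using determined_by_comp by blast
qed (use determined_by_comp2 finite_UnI in blast)+

lemma determined_by_uniform_limit:
  assumes "\<And>e. 0 < e \<Longrightarrow> \<exists>g. determined_by A g \<and> (\<forall>\<phi>\<in>lat_dual. \<bar>f \<phi> - g \<phi>\<bar> < e)"
  shows "determined_by A f"
  unfolding determined_by_def
proof (intro ballI impI)
  fix \<phi> \<psi> assume \<phi>: "\<phi> \<in> lat_dual" and \<psi>: "\<psi> \<in> lat_dual" and agree: "\<forall>x\<in>A. \<phi> x = \<psi> x"
  have bound: "\<bar>f \<phi> - f \<psi>\<bar> < 2 * e" if "0 < e" for e
  proof -
    obtain g where g: "determined_by A g" "\<forall>\<phi>\<in>lat_dual. \<bar>f \<phi> - g \<phi>\<bar> < e"
      using assms[OF \<open>0 < e\<close>] by blast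
    have "g \<phi> = g \<psi>"
      using agree by (intro determined_byD[OF g(1) \<phi> \<psi>]) simp
    then show ?thesis
      using g(2) \<phi> \<psi> by (smt (verit, best))
  qed
  show "f \<phi> = f \<psi>"
  proof (rule ccontr)
    assume "f \<phi> \<noteq> f \<psi>"
    then have "0 < \<bar>f \<phi> - f \<psi>\<bar> / 2"
      by simp
    from bound[OF this] show False
      by simp
  qed
qed

(* For r = 0 this is the zero homomorphism, as x / 0 = 0. *)
definition clip_quotient :: "('a \<Rightarrow> real) \<Rightarrow> real \<Rightarrow> 'a \<Rightarrow> real" where
  "clip_quotient \<phi> r x = max (-1) (min 1 (\<phi> x / r))"

lemma clip_quotient_lat_dual:
  assumes "\<phi> \<in> lat_dual" "0 \<le> r"
  shows "clip_quotient \<phi> r \<in> lat_dual"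
proof -
  have "mono (\<lambda>u::real. max (-1) (min 1 (u / r)))"
    using assms(2) by (intro monoI) (simp add: divide_right_mono max.coboundedI2 min.coboundedI2)
  then show ?thesis
    unfolding clip_quotient_def[abs_def] by (rule lat_dual_comp_mono[OF assms(1)]) auto
qed

lemma clip_quotient_rescale: "\<bar>\<phi> x\<bar> \<le> r \<Longrightarrow> r * clip_quotient \<phi> r x = \<phi> x"
  unfolding clip_quotient_def by (cases "r = 0") (auto simp: abs_le_iff field_simps)

lemma determined_pos_homog_abs_le:
  assumes "pos_homog h" "determined_by A h" and bound: "\<forall>\<psi>\<in>lat_dual. \<bar>h \<psi>\<bar> \<le> e"
    and \<phi>: "\<phi> \<in> lat_dual" and r: "0 \<le> r" "r \<le> 1" "\<forall>x\<in>A. \<bar>\<phi> x\<bar> \<le> r"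
  shows "\<bar>h \<phi>\<bar> \<le> r * e"
proof -
  let ?\<psi> = "clip_quotient \<phi> r"
  have \<psi>: "?\<psi> \<in> lat_dual"
    using clip_quotient_lat_dual[OF \<phi> r(1)] .
  have r\<psi>: "(\<lambda>x. r * ?\<psi> x) \<in> lat_dual"
    using lat_dual_scale[OF \<psi> r(1,2)] .
  have "h \<phi> = h (\<lambda>x. r * ?\<psi> x)"
  proof (rule determined_byD[OF assms(2) \<phi> r\<psi>])
    show "\<phi> x = r * ?\<psi> x" if "x \<in> A" for x
      using clip_quotient_rescale[of \<phi> x r] r(3) that by simp
  qed
  also have "\<dots> = r * h ?\<psi>"
    using assms(1) \<psi> r(1) r\<psi> unfolding pos_homog_def by blast
  finally show ?thesis
    using bound \<psi> r(1) by (simp add: abs_mult mult_left_mono)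
qed

lemma fbl_localized_approx:
  fixes f :: "('a::lattice \<Rightarrow> real) \<Rightarrow> real"
  assumes cob: "countably_order_bounded TYPE('a)" and f: "f \<in> fbl" and "0 < e"
  shows "\<exists>g\<in>fvl. \<exists>a b::'a. \<forall>\<phi>\<in>lat_dual. \<bar>f \<phi> - g \<phi>\<bar> \<le> e * max \<bar>\<phi> a\<bar> \<bar>\<phi> b\<bar>"
proof -
  have "\<forall>n. \<exists>g\<in>fvl. \<forall>\<phi>\<in>lat_dual. \<bar>f \<phi> - g \<phi>\<bar> < 1 / Suc n"
    using fbl_uniform_approx[OF f] by simp
  then obtain G where G: "\<And>n. G n \<in> fvl" "\<And>n. \<forall>\<phi>\<in>lat_dual. \<bar>f \<phi> - G n \<phi>\<bar> < 1 / Suc n"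
    by metis
  obtain S where S: "\<And>n. finite (S n)" "\<And>n. determined_by (S n) (G n)"
    using fvl_determined_by_finite[OF G(1)] by metis
  define A where "A = (\<Union>n. S n)"
  have "countable A"
    unfolding A_def using S(1) by (simp add: countable_finite)
  then obtain a b where ab: "\<forall>x\<in>A. a \<le> x \<and> x \<le> b"
    using cob unfolding countably_order_bounded_def by blast
  have GA: "determined_by A (G n)" for n
    using S(2) by (rule determined_by_mono[rotated]) (auto simp: A_def)
  have fA: "determined_by A f"
  proof (rule determined_by_uniform_limit)
    fix d :: real assume "0 < d"
    then obtain n where "1 / Suc n < d"
      using nat_approx_posE by blast
    then show "\<exists>g. determined_by A g \<and> (\<forall>\<phi>\<in>lat_dual. \<bar>f \<phi> - g \<phi>\<bar> < d)"
      using GA G(2) by (meson order.strict_trans)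
  qed
  obtain n where n: "1 / Suc n < e"
    using nat_approx_posE \<open>0 < e\<close> by blast
  have "\<bar>f \<phi> - G n \<phi>\<bar> \<le> max \<bar>\<phi> a\<bar> \<bar>\<phi> b\<bar> * e" if \<phi>: "\<phi> \<in> lat_dual" for \<phi>
  proof (rule determined_pos_homog_abs_le[OF _ _ _ \<phi>])
    show "pos_homog (\<lambda>\<phi>. f \<phi> - G n \<phi>)"
      using fbl_pos_homog[OF f] fvl_pos_homog[OF G(1)] by (rule pos_homog_diff)
    show "determined_by A (\<lambda>\<phi>. f \<phi> - G n \<phi>)"
      using determined_by_comp2[OF fA GA, of "(-)"] by simp
    show "\<forall>\<psi>\<in>lat_dual. \<bar>f \<psi> - G n \<psi>\<bar> \<le> e"
      using G(2) n by (meson less_imp_le order.strict_trans)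
    show "0 \<le> max \<bar>\<phi> a\<bar> \<bar>\<phi> b\<bar>" "max \<bar>\<phi> a\<bar> \<bar>\<phi> b\<bar> \<le> 1"
      using lat_dual_abs_le[OF \<phi>] by auto
    show "\<forall>x\<in>A. \<bar>\<phi> x\<bar> \<le> max \<bar>\<phi> a\<bar> \<bar>\<phi> b\<bar>"
      using ab lat_dual_mono[OF \<phi>] by (fastforce simp: abs_le_iff)
  qed
  then show ?thesis
    using G(1) by (metis mult.commute)
qed

lemma countably_order_bounded_imp_fvl_order_dense:
  assumes "countably_order_bounded TYPE('a::lattice)"
  shows "fvl_order_dense TYPE('a)"
  unfolding fvl_order_dense_def
proof (intro ballI impI)
  fix f :: "('a \<Rightarrow> real) \<Rightarrow> real"
  assume f: "f \<in> fbl" and pos: "(\<forall>\<phi>\<in>lat_dual. 0 \<le> f \<phi>) \<and> (\<exists>\<phi>\<in>lat_dual. f \<phi> \<noteq> 0)"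
  then obtain \<phi>\<^sub>0 where \<phi>\<^sub>0: "\<phi>\<^sub>0 \<in> lat_dual" "0 < f \<phi>\<^sub>0"
    by force
  define e where "e = f \<phi>\<^sub>0 / 3"
  have "0 < e"
    using \<phi>\<^sub>0(2) by (simp add: e_def)
  then obtain g a b where g: "g \<in> fvl"
    and err: "\<forall>\<phi>\<in>lat_dual. \<bar>f \<phi> - g \<phi>\<bar> \<le> e * max \<bar>\<phi> a\<bar> \<bar>\<phi> b\<bar>"
    using fbl_localized_approx[OF assms f] by blast
  define g' where "g' = (\<lambda>\<phi>. max 0 (g \<phi> - e * max \<bar>\<phi> a\<bar> \<bar>\<phi> b\<bar>))"
  have "g' \<in> fvl"
    unfolding g'_def by (intro fvl.sup fvl_const_zero fvl_diff g fvl.smult fvl_abs fvl_eval)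
  moreover have "0 \<le> g' \<phi> \<and> g' \<phi> \<le> f \<phi>" if "\<phi> \<in> lat_dual" for \<phi>
    using err pos that unfolding g'_def by force
  moreover have "g' \<phi>\<^sub>0 \<noteq> 0"
  proof -
    have "e * max \<bar>\<phi>\<^sub>0 a\<bar> \<bar>\<phi>\<^sub>0 b\<bar> \<le> e"
      using lat_dual_abs_le[OF \<phi>\<^sub>0(1)] \<open>0 < e\<close> by (simp add: mult_le_cancel_left1)
    moreover have "\<bar>f \<phi>\<^sub>0 - g \<phi>\<^sub>0\<bar> \<le> e * max \<bar>\<phi>\<^sub>0 a\<bar> \<bar>\<phi>\<^sub>0 b\<bar>"
      using err \<phi>\<^sub>0(1) by blast
    ultimately have "0 < g \<phi>\<^sub>0 - e * max \<bar>\<phi>\<^sub>0 a\<bar> \<bar>\<phi>\<^sub>0 b\<bar>"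
      using \<phi>\<^sub>0(2) unfolding e_def by linarith
    then show ?thesis
      unfolding g'_def by simp
  qed
  ultimately show "\<exists>g\<in>fvl. (\<forall>\<phi>\<in>lat_dual. 0 \<le> g \<phi> \<and> g \<phi> \<le> f \<phi>) \<and> (\<exists>\<phi>\<in>lat_dual. g \<phi> \<noteq> 0)"
    using \<phi>\<^sub>0(1) by blast
qed

(* The sign s = -1 treats sequences below b, so the order dual needs no separate construction. *)
locale probe_sequence =
  fixes x :: "nat \<Rightarrow> 'a::lattice" and b :: 'a and s :: real
  assumes sign: "\<bar>s\<bar> = 1"
    and signed_increase: "\<phi> \<in> lat_dual \<Longrightarrow> 0 \<le> s * (\<phi> (x n) - \<phi> b)"
begin

definition increment :: "nat \<Rightarrow> ('a \<Rightarrow> real) \<Rightarrow> real" where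
  "increment n \<phi> = (1/2)^n * (s * (\<phi> (x n) - \<phi> b))"

definition probe :: "('a \<Rightarrow> real) \<Rightarrow> real" where
  "probe \<phi> = max 0 (max 0 (s * \<phi> b) - (\<Sum>n. increment n \<phi>))"

definition probe_trunc :: "nat \<Rightarrow> ('a \<Rightarrow> real) \<Rightarrow> real" where
  "probe_trunc N \<phi> = max 0 (max 0 (s * \<phi> b) - (\<Sum>n<N. increment n \<phi>))"

lemma increment_nonneg: "\<phi> \<in> lat_dual \<Longrightarrow> 0 \<le> increment n \<phi>"
  unfolding increment_def by (intro mult_nonneg_nonneg signed_increase) simp_all

lemma increment_le: "increment n \<phi> \<le> (1/2)^n * (\<bar>\<phi> (x n)\<bar> + \<bar>\<phi> b\<bar>)"
proof -
  have "s * (\<phi> (x n) - \<phi> b) \<le> \<bar>\<phi> (x n)\<bar> + \<bar>\<phi> b\<bar>"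
    using sign abs_ge_self[of "s * (\<phi> (x n) - \<phi> b)"] abs_triangle_ineq4[of "\<phi> (x n)" "\<phi> b"]
    by (simp add: abs_mult)
  then show ?thesis
    unfolding increment_def by (simp add: mult_left_mono)
qed

lemma summable_increment:
  assumes "\<phi> \<in> lat_dual"
  shows "summable (\<lambda>n. increment n \<phi>)"
proof (rule summable_comparison_test'[of "\<lambda>n. (1/2)^n * (\<bar>\<phi> (x n)\<bar> + \<bar>\<phi> b\<bar>)" 0])
  show "summable (\<lambda>n. (1/2::real)^n * (\<bar>\<phi> (x n)\<bar> + \<bar>\<phi> b\<bar>))"
    using assms by (intro summable_weighted_abs) simp_all
  show "norm (increment n \<phi>) \<le> (1/2)^n * (\<bar>\<phi> (x n)\<bar> + \<bar>\<phi> b\<bar>)" for n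
    using increment_le increment_nonneg[OF assms] by simp
qed

lemma probe_bounds:
  assumes "\<phi> \<in> lat_dual"
  shows "0 \<le> probe \<phi>" "probe \<phi> \<le> \<bar>\<phi> b\<bar>"
proof -
  have "s * \<phi> b \<le> \<bar>\<phi> b\<bar>"
    using sign abs_ge_self[of "s * \<phi> b"] by (simp add: abs_mult)
  moreover have "0 \<le> (\<Sum>n. increment n \<phi>)"
    using assms by (intro suminf_nonneg summable_increment increment_nonneg)
  ultimately show "0 \<le> probe \<phi>" "probe \<phi> \<le> \<bar>\<phi> b\<bar>"
    unfolding probe_def by auto
qed

lemma probe_pos_homog: "pos_homog probe"
  unfolding pos_homog_def
proof (intro ballI allI impI)
  fix \<phi> :: "'a \<Rightarrow> real" and c :: real
  assume \<phi>: "\<phi> \<in> lat_dual" and c: "0 \<le> c"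
  have "(\<Sum>n. increment n (\<lambda>y. c * \<phi> y)) = (\<Sum>n. c * increment n \<phi>)"
    unfolding increment_def by (simp add: algebra_simps)
  also have "\<dots> = c * (\<Sum>n. increment n \<phi>)"
    using summable_increment[OF \<phi>] by (rule suminf_mult)
  finally show "probe (\<lambda>y. c * \<phi> y) = c * probe \<phi>"
    unfolding probe_def using c by (simp add: max_mult_distrib_left right_diff_distrib mult.left_commute)
qed

lemma probe_trunc_fvl: "probe_trunc N \<in> fvl"
  unfolding probe_trunc_def[abs_def] increment_def
  by (intro fvl.sup fvl_const_zero fvl.smult fvl_diff fvl_sum fvl_eval)

lemma probe_trunc_error:
  assumes "\<phi> \<in> lat_dual"
  shows "\<bar>probe \<phi> - probe_trunc N \<phi>\<bar> \<le> (\<Sum>k. (1/2)^(k+N) * (\<bar>\<phi> (x (k+N))\<bar> + \<bar>\<phi> b\<bar>))"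
proof -
  let ?tail = "\<Sum>k. increment (k+N) \<phi>"
  have "(\<Sum>n. increment n \<phi>) = ?tail + (\<Sum>n<N. increment n \<phi>)"
    using summable_increment[OF assms] by (rule suminf_split_initial_segment)
  moreover have "0 \<le> ?tail"
    using assms summable_increment by (intro suminf_nonneg summable_ignore_initial_segment increment_nonneg)
  ultimately have "\<bar>probe \<phi> - probe_trunc N \<phi>\<bar> \<le> ?tail"
    unfolding probe_def probe_trunc_def by linarith
  also have "\<dots> \<le> (\<Sum>k. (1/2)^(k+N) * (\<bar>\<phi> (x (k+N))\<bar> + \<bar>\<phi> b\<bar>))"
    using assms increment_le
    by (intro suminf_le summable_ignore_initial_segment summable_increment summable_weighted_abs) simp_all
  finally show ?thesis .
qed

lemma probe_fbl: "probe \<in> fbl"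
  unfolding fbl_def
proof (intro CollectI conjI allI impI)
  show "pos_homog probe"
    by (rule probe_pos_homog)
  have "fbl_norm probe \<le> ereal 1"
  proof (rule fbl_norm_le)
    fix xs :: "('a \<Rightarrow> real) list"
    assume xs: "norming_list xs"
    then have "(\<Sum>\<phi>\<leftarrow>xs. \<bar>probe \<phi>\<bar>) \<le> (\<Sum>\<phi>\<leftarrow>xs. \<bar>\<phi> b\<bar>)"
      using probe_bounds by (intro sum_list_mono) (auto simp: norming_list_def)
    also have "\<dots> \<le> 1"
      using xs by (simp add: norming_list_def)
    finally show "(\<Sum>\<phi>\<leftarrow>xs. \<bar>probe \<phi>\<bar>) \<le> 1" .
  qed
  then show "fbl_norm probe < \<infinity>"
    using order.strict_trans1 by fastforce
  fix e :: real assume "0 < e"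
  then obtain N where N: "(1/2::real)^N < e/4"
    using real_arch_pow_inv[of "e/4" "1/2"] by auto
  have "fbl_norm (\<lambda>\<phi>. probe \<phi> - probe_trunc N \<phi>) \<le> ereal (2 * (\<Sum>k. (1/2::real)^(k+N)))"
    using probe_trunc_error by (intro fbl_norm_le_suminf summable_ignore_initial_segment) simp_all
  also have "(\<Sum>k. (1/2::real)^(k+N)) = 2 * (1/2)^N"
    using suminf_mult2[OF summable_geometric[of "1/2::real"], of "(1/2)^N"]
    by (simp add: power_add suminf_geometric mult.commute)
  finally have "fbl_norm (\<lambda>\<phi>. probe \<phi> - probe_trunc N \<phi>) < ereal e"
    using N by (simp add: le_less_trans)
  then show "\<exists>g\<in>fvl. fbl_norm (\<lambda>\<phi>. probe \<phi> - g \<phi>) < ereal e"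
    using probe_trunc_fvl by blast
qed

lemma probe_const_sign: "probe (\<lambda>_. s) = 1"
proof -
  have "s * s = 1"
    using sign by (metis abs_mult_self_eq mult_1)
  then show ?thesis
    unfolding probe_def increment_def by simp
qed

lemma probe_vanishes:
  assumes \<psi>: "\<psi> \<in> lat_dual" and "\<psi> (x N) = s" and "0 \<le> t" "s * \<psi> b \<le> t"
    and t: "t * (1 + (1/2)^N) \<le> (1/2)^N"
  shows "probe \<psi> = 0"
proof -
  have "s * s = 1"
    using sign by (metis abs_mult_self_eq mult_1)
  then have "increment N \<psi> = (1/2)^N * (1 - s * \<psi> b)"
    unfolding increment_def using assms(2) by (simp add: right_diff_distrib)
  also have "\<dots> \<ge> (1/2)^N * (1 - t)"
    using assms(4) by (intro mult_left_mono) simp_all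
  finally have "t \<le> increment N \<psi>"
    using t by (simp add: algebra_simps)
  also have "\<dots> \<le> (\<Sum>n. increment n \<psi>)"
    using \<psi> by (intro sum_le_suminf[of _ "{N}", simplified] summable_increment increment_nonneg) auto
  finally show ?thesis
    unfolding probe_def using assms(3,4) by simp
qed

lemma not_fvl_order_dense:
  assumes escape: "\<And>\<phi> S. \<phi> \<in> lat_dual \<Longrightarrow> finite S \<Longrightarrow> \<exists>N. \<forall>t. 0 < t \<longrightarrow> t \<le> 1 \<longrightarrow>
      (\<exists>\<psi>\<in>lat_dual. (\<forall>y\<in>S. \<psi> y = t * \<phi> y) \<and> \<psi> (x N) = s)"
  shows "\<not> fvl_order_dense TYPE('a)"
proof
  assume "fvl_order_dense TYPE('a)"
  moreover have "\<exists>\<phi>\<in>lat_dual. probe \<phi> \<noteq> 0"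
    using const_lat_dual[of s] sign probe_const_sign by (intro bexI[of _ "\<lambda>_. s"]) simp_all
  ultimately obtain g \<phi> where g: "g \<in> fvl" "\<And>\<psi>. \<psi> \<in> lat_dual \<Longrightarrow> 0 \<le> g \<psi> \<and> g \<psi> \<le> probe \<psi>"
    and \<phi>: "\<phi> \<in> lat_dual" "g \<phi> \<noteq> 0"
    unfolding fvl_order_dense_def using probe_fbl probe_bounds by blast
  obtain S where S: "finite S" "determined_by S g"
    using fvl_determined_by_finite[OF g(1)] by blast
  obtain N where N: "\<And>t. 0 < t \<Longrightarrow> t \<le> 1 \<Longrightarrow>
      \<exists>\<psi>\<in>lat_dual. (\<forall>y\<in>insert b S. \<psi> y = t * \<phi> y) \<and> \<psi> (x N) = s"
    using escape[OF \<phi>(1)] S(1) by blast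
  define c :: real where "c = (1/2)^N"
  define t where "t = c / (1 + c)"
  have "0 < c"
    by (simp add: c_def)
  then have t: "0 < t" "t \<le> 1" "t * (1 + c) = c"
    unfolding t_def by (simp_all add: field_simps)
  then obtain \<psi> where \<psi>: "\<psi> \<in> lat_dual" "\<forall>y\<in>insert b S. \<psi> y = t * \<phi> y" "\<psi> (x N) = s"
    using N by blast
  have "s * \<phi> b \<le> 1"
    using sign lat_dual_abs_le[OF \<phi>(1), of b] abs_ge_self[of "s * \<phi> b"] by (simp add: abs_mult)
  then have "s * \<psi> b \<le> t"
    using \<psi>(2) t(1) by (simp add: mult.left_commute mult_left_le)
  then have "probe \<psi> = 0"
    using probe_vanishes[OF \<psi>(1,3) less_imp_le[OF t(1)] _ eq_refl[OF t(3)[unfolded c_def]]] by blast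
  then have "g \<psi> = 0"
    using g(2)[OF \<psi>(1)] by simp
  moreover have "g \<psi> = g (\<lambda>y. t * \<phi> y)"
  proof -
    have "(\<lambda>y. t * \<phi> y) \<in> lat_dual"
      using lat_dual_scale[OF \<phi>(1)] t(1,2) by simp
    moreover have "\<forall>y\<in>S. \<psi> y = t * \<phi> y"
      using \<psi>(2) by simp
    ultimately show ?thesis
      by (intro determined_byD[OF S(2) \<psi>(1)]) simp_all
  qed
  moreover have "g (\<lambda>y. t * \<phi> y) = t * g \<phi>"
    using fvl_scale_arg[OF g(1)] t(1) by simp
  ultimately show False
    using t(1) \<phi>(2) by simp
qed

end

lemma chain_cut_above_lat_dual:
  fixes \<phi> :: "'a::lattice \<Rightarrow> real"
  assumes chain: "\<forall>x y::'a. x \<le> y \<or> y \<le> x"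
    and \<phi>: "\<phi> \<in> lat_dual" and t: "0 \<le> t" "t \<le> 1"
  shows "(\<lambda>y. if y \<le> m then t * \<phi> y else 1) \<in> lat_dual"
proof (rule chain_mono_lat_dual[OF chain])
  have bound: "\<bar>t * \<phi> y\<bar> \<le> 1" for y
    using lat_dual_scale[OF \<phi> t] lat_dual_abs_le by blast
  then show "(if y \<le> m then t * \<phi> y else 1) \<in> {-1..1}" for y
    by (auto simp: abs_le_iff)
  show "(if y \<le> m then t * \<phi> y else 1) \<le> (if z \<le> m then t * \<phi> z else 1)" if "y \<le> z" for y z
  proof (cases "z \<le> m")
    case True
    then show ?thesis
      using that order_trans[OF that True] lat_dual_mono[OF \<phi> that] t(1) by (simp add: mult_left_mono)
  qed (use bound[of y] in \<open>simp add: abs_le_iff\<close>)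
qed

lemma chain_cut_below_lat_dual:
  fixes \<phi> :: "'a::lattice \<Rightarrow> real"
  assumes chain: "\<forall>x y::'a. x \<le> y \<or> y \<le> x"
    and \<phi>: "\<phi> \<in> lat_dual" and t: "0 \<le> t" "t \<le> 1"
  shows "(\<lambda>y. if m \<le> y then t * \<phi> y else -1) \<in> lat_dual"
proof (rule chain_mono_lat_dual[OF chain])
  have bound: "\<bar>t * \<phi> y\<bar> \<le> 1" for y
    using lat_dual_scale[OF \<phi> t] lat_dual_abs_le by blast
  then show "(if m \<le> y then t * \<phi> y else -1) \<in> {-1..1}" for y
    by (auto simp: abs_le_iff)
  show "(if m \<le> y then t * \<phi> y else -1) \<le> (if m \<le> z then t * \<phi> z else -1)" if "y \<le> z" for y z
  proof (cases "m \<le> y")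
    case True
    then show ?thesis
      using that order_trans[OF True that] lat_dual_mono[OF \<phi> that] t(1) by (simp add: mult_left_mono)
  qed (use bound[of z] in \<open>simp add: abs_le_iff\<close>)
qed

lemma chain_unbounded_above_not_fvl_order_dense:
  fixes x :: "nat \<Rightarrow> 'a::lattice"
  assumes chain: "\<forall>y z::'a. y \<le> z \<or> z \<le> y"
    and above: "\<And>n. b \<le> x n" and unbounded: "\<And>m. \<exists>n. \<not> x n \<le> m"
  shows "\<not> fvl_order_dense TYPE('a)"
proof -
  interpret probe_sequence x b 1
    by unfold_locales (simp_all add: lat_dual_mono above)
  show ?thesis
  proof (rule not_fvl_order_dense)
    fix \<phi> :: "'a \<Rightarrow> real" and S :: "'a set"
    assume \<phi>: "\<phi> \<in> lat_dual" and "finite S"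
    define m where "m = Sup_fin (insert b S)"
    have S_le: "y \<le> m" if "y \<in> S" for y
      unfolding m_def using \<open>finite S\<close> that by (intro Sup_fin.coboundedI) auto
    obtain N where N: "\<not> x N \<le> m"
      using unbounded by blast
    have "\<exists>\<psi>\<in>lat_dual. (\<forall>y\<in>S. \<psi> y = t * \<phi> y) \<and> \<psi> (x N) = 1" if "0 < t" "t \<le> 1" for t
      using chain_cut_above_lat_dual[OF chain \<phi>, of t m] that S_le N by (intro bexI) auto
    then show "\<exists>N. \<forall>t. 0 < t \<longrightarrow> t \<le> 1 \<longrightarrow> (\<exists>\<psi>\<in>lat_dual. (\<forall>y\<in>S. \<psi> y = t * \<phi> y) \<and> \<psi> (x N) = 1)"
      by blast
  qed
qed

lemma chain_unbounded_below_not_fvl_order_dense: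
  fixes x :: "nat \<Rightarrow> 'a::lattice"
  assumes chain: "\<forall>y z::'a. y \<le> z \<or> z \<le> y"
    and below: "\<And>n. x n \<le> b" and unbounded: "\<And>m. \<exists>n. \<not> m \<le> x n"
  shows "\<not> fvl_order_dense TYPE('a)"
proof -
  interpret probe_sequence x b "-1"
    by unfold_locales (simp_all add: lat_dual_mono below)
  show ?thesis
  proof (rule not_fvl_order_dense)
    fix \<phi> :: "'a \<Rightarrow> real" and S :: "'a set"
    assume \<phi>: "\<phi> \<in> lat_dual" and "finite S"
    define m where "m = Inf_fin (insert b S)"
    have S_ge: "m \<le> y" if "y \<in> S" for y
      unfolding m_def using \<open>finite S\<close> that by (intro Inf_fin.coboundedI) auto
    obtain N where N: "\<not> m \<le> x N"
      using unbounded by blast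
    have "\<exists>\<psi>\<in>lat_dual. (\<forall>y\<in>S. \<psi> y = t * \<phi> y) \<and> \<psi> (x N) = -1" if "0 < t" "t \<le> 1" for t
      using chain_cut_below_lat_dual[OF chain \<phi>, of t m] that S_ge N by (intro bexI) auto
    then show "\<exists>N. \<forall>t. 0 < t \<longrightarrow> t \<le> 1 \<longrightarrow> (\<exists>\<psi>\<in>lat_dual. (\<forall>y\<in>S. \<psi> y = t * \<phi> y) \<and> \<psi> (x N) = -1)"
      by blast
  qed
qed

lemma chain_fvl_order_dense_imp_countably_order_bounded:
  assumes chain: "\<forall>y z::'a::lattice. y \<le> z \<or> z \<le> y"
    and dense: "fvl_order_dense TYPE('a)"
  shows "countably_order_bounded TYPE('a)"
  unfolding countably_order_bounded_def
proof (intro allI impI)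
  fix A :: "'a set"
  assume "countable A"
  show "\<exists>a b. \<forall>x\<in>A. a \<le> x \<and> x \<le> b"
  proof (cases "A = {}")
    case False
    define e where "e = from_nat_into A"
    have A_eq: "A = range e"
      unfolding e_def using \<open>countable A\<close> False by simp
    have "\<exists>b. \<forall>n. e n \<le> b"
    proof (rule ccontr)
      assume "\<nexists>b. \<forall>n. e n \<le> b"
      then have "\<not> fvl_order_dense TYPE('a)"
        by (intro chain_unbounded_above_not_fvl_order_dense[OF chain, of "e 0" "\<lambda>n. sup (e 0) (e n)"])
          (auto intro: order_trans)
      then show False
        using dense by contradiction
    qed
    moreover have "\<exists>a. \<forall>n. a \<le> e n"
    proof (rule ccontr)
      assume "\<nexists>a. \<forall>n. a \<le> e n"
      then have "\<not> fvl_order_dense TYPE('a)"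
        by (intro chain_unbounded_below_not_fvl_order_dense[OF chain, of "\<lambda>n. inf (e 0) (e n)" "e 0"])
          (auto intro: order_trans)
      then show False
        using dense by contradiction
    qed
    ultimately show ?thesis
      unfolding A_eq by blast
  qed simp
qed

theorem mainTheorem8:
  shows "(countably_order_bounded TYPE('a::distrib_lattice) \<longrightarrow> fvl_order_dense TYPE('a))
    \<and> ((\<forall>x y :: 'a. x \<le> y \<or> y \<le> x) \<longrightarrow>
         fvl_order_dense TYPE('a) \<longrightarrow> countably_order_bounded TYPE('a))"
  using countably_order_bounded_imp_fvl_order_dense chain_fvl_order_dense_imp_countably_order_bounded
  by blast

end
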